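(* If $G$ is a $C$-group, then the profinite completion of $G$ is a profinite-$C$ group.
   Context: A permutable complement of a subgroup $H$ of a group $G$ is a subgroup $K$ with $G=HK$ and $H\cap K=1$. A group is a $C$-group if every subgroup has a permutable complement. A profinite group $G$ is a profinite-$C$ group if every closed subgroup of $G$ has a closed permutable complement in $G$. *)

theory Defs
  imports "HOL-Analysis.Analysis" "HOL-Algebra.Algebra"
begin

definition permutable_complement :: "('a, 'b) monoid_scheme \<Rightarrow> 'a set \<Rightarrow> 'a set \<Rightarrow> bool" where
  "permutable_complement G H K \<longleftrightarrow>
     subgroup K G \<and> H <#>\<^bsub>G\<^esub> K = carrier G \<and> H \<inter> K = {\<one>\<^bsub>G\<^esub>}"

definition C_group :: "('a, 'b) monoid_scheme \<Rightarrow> bool" where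
  "C_group G \<longleftrightarrow> group G \<and> (\<forall>H. subgroup H G \<longrightarrow> (\<exists>K. permutable_complement G H K))"

definition topological_group :: "('a, 'b) monoid_scheme \<Rightarrow> 'a topology \<Rightarrow> bool" where
  "topological_group G T \<longleftrightarrow> group G \<and> topspace T = carrier G \<and>
     continuous_map (prod_topology T T) T (\<lambda>(x, y). x \<otimes>\<^bsub>G\<^esub> y) \<and>
     continuous_map T T (\<lambda>x. inv\<^bsub>G\<^esub> x)"

definition profinite_group :: "('a, 'b) monoid_scheme \<Rightarrow> 'a topology \<Rightarrow> bool" where
  "profinite_group G T \<longleftrightarrow> topological_group G T \<and> compact_space T \<and> Hausdorff_space T \<and>
     (\<forall>x\<in>topspace T. connected_component_of_set T x = {x})"

definition profinite_C_group :: "('a, 'b) monoid_scheme \<Rightarrow> 'a topology \<Rightarrow> bool" where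
  "profinite_C_group G T \<longleftrightarrow> profinite_group G T \<and>
     (\<forall>H. subgroup H G \<and> closedin T H \<longrightarrow>
        (\<exists>K. closedin T K \<and> permutable_complement G H K))"

text \<open>Profinite completion: inverse limit of the finite quotients G/N,
  N ranging over normal subgroups of finite index, realised as the set of
  compatible families of cosets inside the product, with the subspace topology
  of the product of discrete topologies.\<close>
definition fin_index_normals :: "('a, 'b) monoid_scheme \<Rightarrow> 'a set set" where
  "fin_index_normals G = {N. N \<lhd> G \<and> finite (rcosets\<^bsub>G\<^esub> N)}"

definition profinite_completion :: "('a, 'b) monoid_scheme \<Rightarrow> ('a set \<Rightarrow> 'a set) monoid" where
  "profinite_completion G =
     \<lparr>carrier = {f \<in> (\<Pi>\<^sub>E N\<in>fin_index_normals G. rcosets\<^bsub>G\<^esub> N).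
                   \<forall>N\<in>fin_index_normals G. \<forall>M\<in>fin_index_normals G. N \<subseteq> M \<longrightarrow> f N \<subseteq> f M},
      mult = (\<lambda>f g. \<lambda>N\<in>fin_index_normals G. f N <#>\<^bsub>G\<^esub> g N),
      one = (\<lambda>N\<in>fin_index_normals G. N)\<rparr>"

definition profinite_completion_topology :: "('a, 'b) monoid_scheme \<Rightarrow> ('a set \<Rightarrow> 'a set) topology" where
  "profinite_completion_topology G =
     subtopology
       (product_topology (\<lambda>N. discrete_topology (rcosets\<^bsub>G\<^esub> N)) (fin_index_normals G))
       (carrier (profinite_completion G))"

end

theory Submission
  imports Defs
begin

text \<open>Let \<open>P\<close> be the profinite completion of a C-group \<open>G\<close> and \<open>H\<close> a closed subgroup of \<open>P\<close>.
  By compactness and Zorn's lemma there is a minimal closed subgroup \<open>K\<close> with \<open>HK = P\<close>.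
  Every finite quotient \<open>G/N\<close> is again a C-group; if \<open>R\<close> is a complement of the image
  \<open>Q\<close> of \<open>H \<inter> K\<close> in \<open>G/N\<close>, then \<open>K\<close> intersected with the preimage of \<open>R\<close> is still a closed
  supplement of \<open>H\<close>, hence equals \<open>K\<close>. So \<open>H \<inter> K\<close> maps into \<open>Q \<inter> R = 1\<close> for every \<open>N\<close>,
  and since the projections to the \<open>G/N\<close> separate points, \<open>H \<inter> K = 1\<close>.\<close>

lemma set_multI: "a \<in> A \<Longrightarrow> b \<in> B \<Longrightarrow> a \<otimes>\<^bsub>G\<^esub> b \<in> A <#>\<^bsub>G\<^esub> B"
  unfolding set_mult_def by blast

lemma set_multE:
  assumes "x \<in> A <#>\<^bsub>G\<^esub> B"
  obtains a b where "a \<in> A" "b \<in> B" "x = a \<otimes>\<^bsub>G\<^esub> b"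
  using assms unfolding set_mult_def by blast

lemma (in group_hom) subgroup_vimage:
  assumes "subgroup R H"
  shows "subgroup {x \<in> carrier G. h x \<in> R} G"
proof (rule G.subgroupI)
  show "{x \<in> carrier G. h x \<in> R} \<noteq> {}"
    using subgroup.one_closed[OF assms] by force
qed (use subgroup.m_closed[OF assms] subgroup.m_inv_closed[OF assms] in auto)

lemma (in group) set_mult_carrier_eq:
  assumes "subgroup H G"
  shows "H <#> carrier G = carrier G"
proof
  show "H <#> carrier G \<subseteq> carrier G"
    using subgroup.subset[OF assms] by (intro set_mult_closed) auto
  show "carrier G \<subseteq> H <#> carrier G"
  proof
    fix x assume "x \<in> carrier G"
    then have "\<one> \<otimes> x \<in> H <#> carrier G"
      using subgroup.one_closed[OF assms] by (intro set_multI)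
    then show "x \<in> H <#> carrier G"
      using \<open>x \<in> carrier G\<close> by simp
  qed
qed

lemma permutable_complement_surj_hom_image:
  assumes "group_hom G F h" "h ` carrier G = carrier F" "subgroup Q F"
    and W: "permutable_complement G {g \<in> carrier G. h g \<in> Q} W"
  shows "permutable_complement F Q (h ` W)"
proof -
  interpret group_hom G F h by fact
  let ?S = "{g \<in> carrier G. h g \<in> Q}"
  have W_sub: "subgroup W G" and SW: "?S <#>\<^bsub>G\<^esub> W = carrier G" and S_Int_W: "?S \<inter> W = {\<one>\<^bsub>G\<^esub>}"
    using W by (simp_all add: permutable_complement_def)
  have W_carrier: "w \<in> carrier G" if "w \<in> W" for w
    using subgroup.mem_carrier[OF W_sub that] .
  have "carrier F \<subseteq> Q <#>\<^bsub>F\<^esub> h ` W"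
  proof
    fix y assume "y \<in> carrier F"
    then obtain g where g: "g \<in> carrier G" "y = h g"
      using assms(2) by auto
    then have "g \<in> ?S <#>\<^bsub>G\<^esub> W"
      using SW by simp
    then obtain s w where sw: "s \<in> ?S" "w \<in> W" "g = s \<otimes>\<^bsub>G\<^esub> w"
      by (rule set_multE)
    then have "y = h s \<otimes>\<^bsub>F\<^esub> h w"
      using g W_carrier by simp
    then show "y \<in> Q <#>\<^bsub>F\<^esub> h ` W"
      using sw by (auto intro: set_multI)
  qed
  moreover have "Q <#>\<^bsub>F\<^esub> h ` W \<subseteq> carrier F"
    using subgroup.subset[OF assms(3)] W_carrier by (intro H.set_mult_closed) auto
  moreover have "Q \<inter> h ` W \<subseteq> {\<one>\<^bsub>F\<^esub>}"
  proof
    fix y assume "y \<in> Q \<inter> h ` W"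
    then obtain w where w: "w \<in> W" "h w \<in> Q" "y = h w"
      by blast
    then have "w = \<one>\<^bsub>G\<^esub>"
      using S_Int_W W_carrier by blast
    then show "y \<in> {\<one>\<^bsub>F\<^esub>}"
      using w(3) by simp
  qed
  moreover have "\<one>\<^bsub>F\<^esub> \<in> Q \<inter> h ` W"
    using subgroup.one_closed[OF assms(3)] subgroup.one_closed[OF W_sub] hom_one by force
  ultimately show ?thesis
    unfolding permutable_complement_def using subgroup_img_is_subgroup[OF W_sub] by blast
qed

lemma C_group_surj_hom_image:
  assumes "C_group G" "group_hom G F h" "h ` carrier G = carrier F"
  shows "C_group F"
  unfolding C_group_def
proof (intro conjI allI impI)
  show "group F"
    using assms(2) by (simp add: group_hom_def group_hom_axioms_def)
  fix Q assume "subgroup Q F"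
  moreover obtain W where "permutable_complement G {g \<in> carrier G. h g \<in> Q} W"
    using assms(1) group_hom.subgroup_vimage[OF assms(2) \<open>subgroup Q F\<close>] by (auto simp: C_group_def)
  ultimately show "\<exists>R. permutable_complement F Q R"
    using assms(2,3) permutable_complement_surj_hom_image by blast
qed

text \<open>If \<open>HK = P\<close> and \<open>R\<close> complements the image of \<open>H \<inter> K\<close>, then \<open>K\<close> can be cut down to the
  preimage of \<open>R\<close>: write \<open>x = hk\<close> and \<open>\<pi> k = \<pi> e \<cdot> r\<close> with \<open>e \<in> H \<inter> K\<close>; then
  \<open>x = (he)(e\<inverse>k)\<close> with \<open>\<pi> (e\<inverse>k) = r\<close>.\<close>
lemma supplement_Int_vimage_complement:
  assumes hom: "group_hom P F \<pi>" and H: "subgroup H P" and K: "subgroup K P"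
    and HK: "H <#>\<^bsub>P\<^esub> K = carrier P"
    and R: "permutable_complement F (\<pi> ` (H \<inter> K)) R"
  shows "H <#>\<^bsub>P\<^esub> (K \<inter> {x \<in> carrier P. \<pi> x \<in> R}) = carrier P"
proof
  interpret group_hom P F \<pi> by (rule hom)
  have R_sub: "subgroup R F" and QR: "\<pi> ` (H \<inter> K) <#>\<^bsub>F\<^esub> R = carrier F"
    using R by (simp_all add: permutable_complement_def)
  show "H <#>\<^bsub>P\<^esub> (K \<inter> {x \<in> carrier P. \<pi> x \<in> R}) \<subseteq> carrier P"
    using subgroup.subset[OF H] by (intro G.set_mult_closed) auto
  show "carrier P \<subseteq> H <#>\<^bsub>P\<^esub> (K \<inter> {x \<in> carrier P. \<pi> x \<in> R})"
  proof
    fix x assume "x \<in> carrier P"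
    then have "x \<in> H <#>\<^bsub>P\<^esub> K"
      by (simp only: HK)
    then obtain h k where hk: "h \<in> H" "k \<in> K" "x = h \<otimes>\<^bsub>P\<^esub> k"
      by (rule set_multE)
    have h: "h \<in> carrier P" and k: "k \<in> carrier P"
      using subgroup.mem_carrier[OF H hk(1)] subgroup.mem_carrier[OF K hk(2)] .
    have "\<pi> k \<in> \<pi> ` (H \<inter> K) <#>\<^bsub>F\<^esub> R"
      using k by (simp only: QR hom_closed)
    then obtain q r where qr: "q \<in> \<pi> ` (H \<inter> K)" "r \<in> R" "\<pi> k = q \<otimes>\<^bsub>F\<^esub> r"
      by (rule set_multE)
    from qr(1) obtain e where e_eq: "q = \<pi> e" and eHK: "e \<in> H \<inter> K"
      by (rule imageE)
    have e: "e \<in> carrier P"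
      using subgroup.mem_carrier[OF H] eHK by simp
    have r: "r \<in> carrier F"
      using subgroup.mem_carrier[OF R_sub qr(2)] .
    let ?l = "inv\<^bsub>P\<^esub> e \<otimes>\<^bsub>P\<^esub> k"
    have "\<pi> ?l = r"
      using e k r qr(3) e_eq by (simp add: H.m_assoc[symmetric])
    moreover have "?l \<in> K"
      using K eHK hk(2) by (simp add: subgroup.m_closed subgroup.m_inv_closed)
    ultimately have l: "?l \<in> K \<inter> {x \<in> carrier P. \<pi> x \<in> R}"
      using qr(2) e k by simp
    have "h \<otimes>\<^bsub>P\<^esub> e \<in> H"
      using H hk(1) eHK by (simp add: subgroup.m_closed)
    moreover have "x = (h \<otimes>\<^bsub>P\<^esub> e) \<otimes>\<^bsub>P\<^esub> ?l"
      using h e k hk(3) by (simp add: G.m_assoc) (simp add: G.m_assoc[symmetric])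
    ultimately show "x \<in> H <#>\<^bsub>P\<^esub> (K \<inter> {x \<in> carrier P. \<pi> x \<in> R})"
      using l set_multI by metis
  qed
qed

lemma compact_space_Inter_chain_nonempty:
  assumes "compact_space T" "\<And>S. S \<in> \<C> \<Longrightarrow> closedin T S \<and> S \<noteq> {}"
    and "\<And>S S'. S \<in> \<C> \<Longrightarrow> S' \<in> \<C> \<Longrightarrow> S \<subseteq> S' \<or> S' \<subseteq> S"
  shows "\<Inter>\<C> \<noteq> {}"
proof -
  have "\<Inter>\<F> \<noteq> {}" if "finite \<F>" "\<F> \<subseteq> \<C>" for \<F>
  proof (cases "\<F> = {}")
    case False
    then have "\<Inter>\<F> \<in> \<F>"
      using that assms(3) by (intro Inter_in_chain[of _ \<C>]) (auto simp: subset_chain_def)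
    then show ?thesis
      using that assms(2) by blast
  qed simp
  moreover have "\<forall>S\<in>\<C>. closedin T S"
    using assms(2) by simp
  ultimately show ?thesis
    using compact_space_fip[THEN iffD1, OF assms(1), rule_format, of \<C>] by simp
qed

lemma subset_Zorn_Inter_nonempty:
  assumes "\<A> \<noteq> {}" and ch: "\<And>\<C>. \<C> \<noteq> {} \<Longrightarrow> subset.chain \<A> \<C> \<Longrightarrow> \<Inter>\<C> \<in> \<A>"
  shows "\<exists>M\<in>\<A>. \<forall>A\<in>\<A>. A \<subseteq> M \<longrightarrow> A = M"
proof -
  have "\<exists>M\<in>uminus ` \<A>. \<forall>A\<in>uminus ` \<A>. M \<subseteq> A \<longrightarrow> A = M"
  proof (rule subset_Zorn_nonempty)
    fix \<D> assume "\<D> \<noteq> {}" "subset.chain (uminus ` \<A>) \<D>"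
    then have "uminus ` \<D> \<noteq> {}" "subset.chain \<A> (uminus ` \<D>)"
      by (auto simp: subset_chain_def)
    then have "\<Inter>(uminus ` \<D>) \<in> \<A>"
      by (rule ch)
    moreover have "\<Union>\<D> = - \<Inter>(uminus ` \<D>)"
      by auto
    ultimately show "\<Union>\<D> \<in> uminus ` \<A>"
      by blast
  qed (use assms(1) in blast)
  then obtain M where M: "M \<in> \<A>" and min: "\<And>A. A \<in> \<A> \<Longrightarrow> - M \<subseteq> - A \<Longrightarrow> - A = - M"
    by (auto simp: image_iff)
  have "A = M" if "A \<in> \<A>" "A \<subseteq> M" for A
    using min[OF that(1)] that(2) by simp
  then show ?thesis
    using M by blast
qed

definition closed_supplement :: "('a, 'b) monoid_scheme \<Rightarrow> 'a topology \<Rightarrow> 'a set \<Rightarrow> 'a set \<Rightarrow> bool" where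
  "closed_supplement G T H K \<longleftrightarrow> subgroup K G \<and> closedin T K \<and> H <#>\<^bsub>G\<^esub> K = carrier G"

lemma topological_group_continuous_map_mult_inv:
  assumes TG: "topological_group G T" and x: "x \<in> carrier G"
  shows "continuous_map T T (\<lambda>k. x \<otimes>\<^bsub>G\<^esub> inv\<^bsub>G\<^esub> k)"
proof -
  have "continuous_map T (prod_topology T T) (\<lambda>k. (x, inv\<^bsub>G\<^esub> k))"
    using TG x by (intro continuous_map_pairedI) (auto simp: topological_group_def)
  moreover have "continuous_map (prod_topology T T) T (\<lambda>(a, b). a \<otimes>\<^bsub>G\<^esub> b)"
    using TG by (simp add: topological_group_def)
  ultimately show ?thesis
    by (auto dest: continuous_map_compose simp: o_def)
qed

text \<open>Given \<open>x\<close>, the sets \<open>{k \<in> K. x k\<inverse> \<in> H}\<close>, \<open>K \<in> \<C>\<close>, form a chain of nonempty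
  closed sets; by compactness they have a common point \<open>k\<close>, and \<open>x = (x k\<inverse>) k\<close>.\<close>
lemma compact_topological_group_set_mult_Inter_chain:
  assumes TG: "topological_group G T" and "compact_space T" and "closedin T H"
    and "\<C> \<noteq> {}" and K: "\<And>K. K \<in> \<C> \<Longrightarrow> closedin T K \<and> H <#>\<^bsub>G\<^esub> K = carrier G"
    and chain: "\<And>K K'. K \<in> \<C> \<Longrightarrow> K' \<in> \<C> \<Longrightarrow> K \<subseteq> K' \<or> K' \<subseteq> K"
  shows "H <#>\<^bsub>G\<^esub> \<Inter>\<C> = carrier G"
proof
  interpret group G
    using TG by (simp add: topological_group_def)
  have top: "topspace T = carrier G"
    using TG by (simp add: topological_group_def)
  have carrier: "A \<subseteq> carrier G" if "closedin T A" for A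
    using closedin_subset[OF that] top by simp
  obtain K0 where K0: "K0 \<in> \<C>"
    using \<open>\<C> \<noteq> {}\<close> by blast
  show "H <#>\<^bsub>G\<^esub> \<Inter>\<C> \<subseteq> carrier G"
    using carrier[OF assms(3)] carrier K[OF K0] K0 by (intro set_mult_closed) auto
  show "carrier G \<subseteq> H <#>\<^bsub>G\<^esub> \<Inter>\<C>"
  proof
    fix x assume x: "x \<in> carrier G"
    define F where "F K = K \<inter> {k \<in> topspace T. x \<otimes>\<^bsub>G\<^esub> inv\<^bsub>G\<^esub> k \<in> H}" for K
    have "closedin T {k \<in> topspace T. x \<otimes>\<^bsub>G\<^esub> inv\<^bsub>G\<^esub> k \<in> H}"
      using topological_group_continuous_map_mult_inv[OF TG x] assms(3)
      by (rule closedin_continuous_map_preimage)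
    then have "closedin T (F K)" if "K \<in> \<C>" for K
      unfolding F_def using K[OF that] by (intro closedin_Int) auto
    moreover have "F K \<noteq> {}" if "K \<in> \<C>" for K
    proof -
      have "x \<in> H <#>\<^bsub>G\<^esub> K"
        using x K[OF that] by simp
      then obtain h k where hk: "h \<in> H" "k \<in> K" "x = h \<otimes>\<^bsub>G\<^esub> k"
        by (rule set_multE)
      have "h \<in> carrier G" "k \<in> carrier G"
        using hk carrier[OF assms(3)] carrier K[OF that] by auto
      then have "k \<in> F K"
        using hk top by (simp add: F_def m_assoc)
      then show ?thesis
        by blast
    qed
    moreover have "S \<subseteq> S' \<or> S' \<subseteq> S" if "S \<in> F ` \<C>" "S' \<in> F ` \<C>" for S S'
      using that chain unfolding F_def by blast
    ultimately have "\<Inter>(F ` \<C>) \<noteq> {}"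
      using \<open>compact_space T\<close> by (intro compact_space_Inter_chain_nonempty) auto
    then obtain k where k: "\<And>K. K \<in> \<C> \<Longrightarrow> k \<in> F K"
      by blast
    then have "k \<in> carrier G" "x \<otimes>\<^bsub>G\<^esub> inv\<^bsub>G\<^esub> k \<in> H" "k \<in> \<Inter>\<C>"
      using k[OF K0] top by (auto simp: F_def)
    moreover have "x = (x \<otimes>\<^bsub>G\<^esub> inv\<^bsub>G\<^esub> k) \<otimes>\<^bsub>G\<^esub> k"
      using x \<open>k \<in> carrier G\<close> by (simp add: m_assoc)
    ultimately show "x \<in> H <#>\<^bsub>G\<^esub> \<Inter>\<C>"
      using set_multI by metis
  qed
qed

lemma closed_supplement_Inter_chain:
  assumes "topological_group G T" and "compact_space T" and "closedin T H"
    and "\<C> \<noteq> {}" and chain: "subset.chain {K. closed_supplement G T H K} \<C>"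
  shows "closed_supplement G T H (\<Inter>\<C>)"
proof -
  have sup: "subgroup K G" "closedin T K" "H <#>\<^bsub>G\<^esub> K = carrier G" if "K \<in> \<C>" for K
    using that chain by (auto simp: subset_chain_def closed_supplement_def)
  then have "H <#>\<^bsub>G\<^esub> \<Inter>\<C> = carrier G"
    using assms(1-4) chain
    by (intro compact_topological_group_set_mult_Inter_chain) (auto simp: subset_chain_def)
  then show ?thesis
    unfolding closed_supplement_def
    using \<open>\<C> \<noteq> {}\<close> sup(1,2) by (auto intro: subgroup_Inter closedin_Inter)
qed

lemma minimal_closed_supplement_exists:
  assumes TG: "topological_group G T" and "compact_space T" and "subgroup H G" "closedin T H"
  obtains K where "closed_supplement G T H K"
    and "\<And>K'. closed_supplement G T H K' \<Longrightarrow> K' \<subseteq> K \<Longrightarrow> K' = K"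
proof -
  interpret group G
    using TG by (simp add: topological_group_def)
  have "closedin T (carrier G)"
    by (metis TG closedin_topspace topological_group_def)
  then have "closed_supplement G T H (carrier G)"
    using assms(3) subgroup_self set_mult_carrier_eq by (simp add: closed_supplement_def)
  then have "\<exists>K\<in>{K. closed_supplement G T H K}. \<forall>K'\<in>{K. closed_supplement G T H K}. K' \<subseteq> K \<longrightarrow> K' = K"
    using closed_supplement_Inter_chain[OF TG assms(2,4)]
    by (intro subset_Zorn_Inter_nonempty) auto
  then show ?thesis
    using that by blast
qed

lemma minimal_closed_supplement_image_trivial:
  assumes TG: "topological_group P T" and H: "subgroup H P"
    and K: "closed_supplement P T H K"
    and minimal: "\<And>K'. closed_supplement P T H K' \<Longrightarrow> K' \<subseteq> K \<Longrightarrow> K' = K"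
    and hom: "group_hom P F \<pi>" and "C_group F"
    and cont: "continuous_map T (discrete_topology (carrier F)) \<pi>"
  shows "\<pi> ` (H \<inter> K) \<subseteq> {\<one>\<^bsub>F\<^esub>}"
proof -
  interpret group_hom P F \<pi> by (rule hom)
  have Ksub: "subgroup K P" "closedin T K" "H <#>\<^bsub>P\<^esub> K = carrier P"
    using K by (auto simp: closed_supplement_def)
  have "subgroup (\<pi> ` (H \<inter> K)) F"
    using H Ksub(1) by (intro subgroup_img_is_subgroup G.subgroups_Inter_pair)
  then obtain R where R: "permutable_complement F (\<pi> ` (H \<inter> K)) R"
    using \<open>C_group F\<close> by (auto simp: C_group_def)
  let ?L = "K \<inter> {x \<in> carrier P. \<pi> x \<in> R}"
  have "closedin T {x \<in> topspace T. \<pi> x \<in> R}"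
    using R subgroup.subset
    by (intro closedin_continuous_map_preimage[OF cont]) (auto simp: permutable_complement_def)
  then have "closedin T ?L"
    using TG Ksub(2) by (intro closedin_Int) (auto simp: topological_group_def)
  moreover have "subgroup ?L P"
    using R Ksub(1) by (intro G.subgroups_Inter_pair subgroup_vimage) (auto simp: permutable_complement_def)
  moreover have "H <#>\<^bsub>P\<^esub> ?L = carrier P"
    using hom H Ksub(1,3) R by (rule supplement_Int_vimage_complement)
  ultimately have "?L = K"
    using minimal by (auto simp: closed_supplement_def)
  then have "\<pi> ` (H \<inter> K) \<subseteq> \<pi> ` (H \<inter> K) \<inter> R"
    by blast
  also have "\<dots> = {\<one>\<^bsub>F\<^esub>}"
    using R by (simp add: permutable_complement_def)
  finally show ?thesis .
qed

lemma closedin_product_discrete_topology_pairwise: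
  "closedin (product_topology (\<lambda>i. discrete_topology (A i)) I)
     {f \<in> (\<Pi>\<^sub>E i\<in>I. A i). \<forall>i\<in>I. \<forall>j\<in>I. R i j \<longrightarrow> P (f i) (f j)}"
  (is "closedin ?T ?S")
proof -
  have closed: "closedin ?T {f \<in> topspace ?T. P (f i) (f j)}" if "i \<in> I" "j \<in> I" for i j
  proof -
    have "continuous_map ?T (discrete_topology (A i \<times> A j)) (\<lambda>f. (f i, f j))"
      unfolding prod_topology_discrete_topology
      using that by (intro continuous_map_pairedI continuous_map_product_projection)
    then have "closedin ?T {f \<in> topspace ?T. (f i, f j) \<in> {(a, b) \<in> A i \<times> A j. P a b}}"
      by (rule closedin_continuous_map_preimage) auto
    moreover have "{f \<in> topspace ?T. (f i, f j) \<in> {(a, b) \<in> A i \<times> A j. P a b}} =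
        {f \<in> topspace ?T. P (f i) (f j)}"
      using that by auto
    ultimately show ?thesis
      by simp
  qed
  have "?S = \<Inter>(insert (topspace ?T)
      ((\<lambda>(i, j). {f \<in> topspace ?T. P (f i) (f j)}) ` {(i, j). i \<in> I \<and> j \<in> I \<and> R i j}))"
    by auto
  also have "closedin ?T \<dots>"
    using closed closedin_topspace[of ?T] by (intro closedin_Inter) auto
  finally show ?thesis .
qed

lemma connected_component_of_set_subtopology_product_discrete:
  assumes "x \<in> topspace (subtopology (product_topology (\<lambda>i. discrete_topology (A i)) I) S)"
  shows "connected_component_of_set (subtopology (product_topology (\<lambda>i. discrete_topology (A i)) I) S) x = {x}"
    (is "connected_component_of_set ?T x = _")
proof
  show "{x} \<subseteq> connected_component_of_set ?T x"
    using assms by (simp add: connected_component_of_refl)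
  show "connected_component_of_set ?T x \<subseteq> {x}"
  proof
    fix y assume "y \<in> connected_component_of_set ?T x"
    then obtain C where C: "connectedin ?T C" "x \<in> C" "y \<in> C"
      by (auto simp: connected_component_of_def)
    have "x i = y i" if "i \<in> I" for i
    proof -
      have "continuous_map ?T (discrete_topology (A i)) (\<lambda>f. f i)"
        using that by (intro continuous_map_from_subtopology continuous_map_product_projection)
      then have "connectedin (discrete_topology (A i)) ((\<lambda>f. f i) ` C)"
        using C(1) by (rule connectedin_continuous_map_image)
      then show ?thesis
        using C(2,3) by (auto simp: connectedin_discrete_topology)
    qed
    moreover have "x \<in> extensional I" "y \<in> extensional I"
      using assms connectedin_subset_topspace[OF C(1)] C(3) by (auto simp: PiE_iff)
    ultimately show "y \<in> {x}"
      by (auto intro: extensionalityI)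
  qed
qed

lemma C_group_FactGroup:
  assumes "C_group G" "N \<lhd> G"
  shows "C_group (G Mod N)"
proof (rule C_group_surj_hom_image[OF assms(1)])
  show "group_hom G (G Mod N) (\<lambda>g. N #>\<^bsub>G\<^esub> g)"
    using assms(2) normal.r_coset_hom_Mod normal.factorgroup_is_group
    by (auto simp: group_hom_def group_hom_axioms_def normal_def)
  show "(\<lambda>g. N #>\<^bsub>G\<^esub> g) ` carrier G = carrier (G Mod N)"
    by (simp add: carrier_FactGroup)
qed

lemma fin_index_normals_normal: "N \<in> fin_index_normals G \<Longrightarrow> N \<lhd> G"
  by (simp add: fin_index_normals_def)

lemma carrier_profinite_completion:
  "carrier (profinite_completion G) =
     {f \<in> (\<Pi>\<^sub>E N\<in>fin_index_normals G. rcosets\<^bsub>G\<^esub> N).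
        \<forall>N\<in>fin_index_normals G. \<forall>M\<in>fin_index_normals G. N \<subseteq> M \<longrightarrow> f N \<subseteq> f M}"
  by (simp add: profinite_completion_def)

lemma mult_profinite_completion:
  "f \<otimes>\<^bsub>profinite_completion G\<^esub> g = (\<lambda>N\<in>fin_index_normals G. f N <#>\<^bsub>G\<^esub> g N)"
  by (simp add: profinite_completion_def)

lemma one_profinite_completion:
  "\<one>\<^bsub>profinite_completion G\<^esub> = (\<lambda>N\<in>fin_index_normals G. N)"
  by (simp add: profinite_completion_def)

lemma profinite_completion_component:
  "f \<in> carrier (profinite_completion G) \<Longrightarrow> N \<in> fin_index_normals G \<Longrightarrow> f N \<in> rcosets\<^bsub>G\<^esub> N"
  by (auto simp: carrier_profinite_completion)

lemma profinite_completion_component_mono: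
  "f \<in> carrier (profinite_completion G) \<Longrightarrow> N \<in> fin_index_normals G \<Longrightarrow> M \<in> fin_index_normals G \<Longrightarrow>
     N \<subseteq> M \<Longrightarrow> f N \<subseteq> f M"
  by (auto simp: carrier_profinite_completion)

lemma profinite_completion_extensional:
  "f \<in> carrier (profinite_completion G) \<Longrightarrow> f \<in> extensional (fin_index_normals G)"
  by (auto simp: carrier_profinite_completion PiE_iff)

lemma profinite_completion_eq_oneI:
  assumes "f \<in> carrier (profinite_completion G)" "\<And>N. N \<in> fin_index_normals G \<Longrightarrow> f N = N"
  shows "f = \<one>\<^bsub>profinite_completion G\<^esub>"
  using assms profinite_completion_extensional[OF assms(1)]
  by (auto simp: one_profinite_completion intro: extensionalityI)

lemma profinite_completion_set_inv:
  assumes f: "f \<in> carrier (profinite_completion G)"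
  shows "(\<lambda>N\<in>fin_index_normals G. set_inv\<^bsub>G\<^esub> (f N)) \<in> carrier (profinite_completion G)"
    and "(\<lambda>N\<in>fin_index_normals G. set_inv\<^bsub>G\<^esub> (f N)) \<otimes>\<^bsub>profinite_completion G\<^esub> f =
      \<one>\<^bsub>profinite_completion G\<^esub>"
proof -
  have "set_inv\<^bsub>G\<^esub> (f N) \<in> rcosets\<^bsub>G\<^esub> N" if "N \<in> fin_index_normals G" for N
    using fin_index_normals_normal[OF that] profinite_completion_component[OF f that]
    by (rule normal.setinv_closed)
  moreover have "set_inv\<^bsub>G\<^esub> (f N) \<subseteq> set_inv\<^bsub>G\<^esub> (f M)"
    if "N \<in> fin_index_normals G" "M \<in> fin_index_normals G" "N \<subseteq> M" for N M
    using profinite_completion_component_mono[OF f that] unfolding SET_INV_def by blast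
  ultimately show "(\<lambda>N\<in>fin_index_normals G. set_inv\<^bsub>G\<^esub> (f N)) \<in> carrier (profinite_completion G)"
    by (simp add: carrier_profinite_completion)
  show "(\<lambda>N\<in>fin_index_normals G. set_inv\<^bsub>G\<^esub> (f N)) \<otimes>\<^bsub>profinite_completion G\<^esub> f =
      \<one>\<^bsub>profinite_completion G\<^esub>"
    unfolding mult_profinite_completion one_profinite_completion
    by (intro restrict_ext)
      (simp add: normal.rcosets_inv_mult_group_eq[OF fin_index_normals_normal profinite_completion_component[OF f]])
qed

text \<open>No hypothesis on \<open>G\<close> is needed: if \<open>G\<close> is not a group it has no normal subgroups, and its
  profinite completion is the trivial group.\<close>
lemma group_profinite_completion: "group (profinite_completion G)"
proof (rule groupI)
  let ?P = "profinite_completion G"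
  fix f g assume f: "f \<in> carrier ?P" and g: "g \<in> carrier ?P"
  have "f N <#>\<^bsub>G\<^esub> g N \<in> rcosets\<^bsub>G\<^esub> N" if "N \<in> fin_index_normals G" for N
    using fin_index_normals_normal[OF that] profinite_completion_component[OF f that]
      profinite_completion_component[OF g that]
    by (rule normal.setmult_closed)
  moreover have "f N <#>\<^bsub>G\<^esub> g N \<subseteq> f M <#>\<^bsub>G\<^esub> g M"
    if "N \<in> fin_index_normals G" "M \<in> fin_index_normals G" "N \<subseteq> M" for N M
    using profinite_completion_component_mono[OF f that] profinite_completion_component_mono[OF g that]
    by (rule mono_set_mult)
  ultimately show "f \<otimes>\<^bsub>?P\<^esub> g \<in> carrier ?P"
    by (simp add: carrier_profinite_completion mult_profinite_completion)
next
  have "N \<in> rcosets\<^bsub>G\<^esub> N" if "N \<in> fin_index_normals G" for N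
    using fin_index_normals_normal[OF that]
    by (auto simp: normal_def intro: subgroup.subgroup_in_rcosets)
  then show "\<one>\<^bsub>profinite_completion G\<^esub> \<in> carrier (profinite_completion G)"
    by (simp add: carrier_profinite_completion one_profinite_completion)
next
  fix f g h assume "f \<in> carrier (profinite_completion G)" "g \<in> carrier (profinite_completion G)"
    "h \<in> carrier (profinite_completion G)"
  then show "f \<otimes>\<^bsub>profinite_completion G\<^esub> g \<otimes>\<^bsub>profinite_completion G\<^esub> h =
      f \<otimes>\<^bsub>profinite_completion G\<^esub> (g \<otimes>\<^bsub>profinite_completion G\<^esub> h)"
    unfolding mult_profinite_completion
    by (intro restrict_ext)
      (simp add: normal.rcosets_assoc[OF fin_index_normals_normal profinite_completion_component
          profinite_completion_component profinite_completion_component])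
next
  fix f assume f: "f \<in> carrier (profinite_completion G)"
  then show "\<one>\<^bsub>profinite_completion G\<^esub> \<otimes>\<^bsub>profinite_completion G\<^esub> f = f"
    unfolding mult_profinite_completion one_profinite_completion
    by (intro extensionalityI[OF _ profinite_completion_extensional[OF f]])
      (auto simp: normal.rcosets_mult_eq[OF fin_index_normals_normal profinite_completion_component[OF f]])
  show "\<exists>g\<in>carrier (profinite_completion G). g \<otimes>\<^bsub>profinite_completion G\<^esub> f = \<one>\<^bsub>profinite_completion G\<^esub>"
    using profinite_completion_set_inv[OF f] by blast
qed

lemma inv_profinite_completion:
  "f \<in> carrier (profinite_completion G) \<Longrightarrow>
     inv\<^bsub>profinite_completion G\<^esub> f = (\<lambda>N\<in>fin_index_normals G. set_inv\<^bsub>G\<^esub> (f N))"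
  using group.inv_equality[OF group_profinite_completion] profinite_completion_set_inv by blast

lemma group_hom_profinite_completion_component:
  assumes "N \<in> fin_index_normals G"
  shows "group_hom (profinite_completion G) (G Mod N) (\<lambda>f. f N)"
  using assms group_profinite_completion normal.factorgroup_is_group[OF fin_index_normals_normal[OF assms]]
  by (auto simp: group_hom_def group_hom_axioms_def hom_def FactGroup_def profinite_completion_component
      mult_profinite_completion)

lemma topspace_profinite_completion_topology:
  "topspace (profinite_completion_topology G) = carrier (profinite_completion G)"
  by (auto simp: profinite_completion_topology_def carrier_profinite_completion)

lemma continuous_map_profinite_completion_component:
  "N \<in> fin_index_normals G \<Longrightarrow>
     continuous_map (profinite_completion_topology G) (discrete_topology (rcosets\<^bsub>G\<^esub> N)) (\<lambda>f. f N)"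
  unfolding profinite_completion_topology_def
  by (intro continuous_map_from_subtopology continuous_map_product_projection)

lemma continuous_map_into_profinite_completion:
  assumes "\<phi> \<in> topspace T \<rightarrow> carrier (profinite_completion G)"
    and "\<And>N. N \<in> fin_index_normals G \<Longrightarrow> continuous_map T (discrete_topology (rcosets\<^bsub>G\<^esub> N)) (\<lambda>x. \<phi> x N)"
  shows "continuous_map T (profinite_completion_topology G) \<phi>"
  unfolding profinite_completion_topology_def continuous_map_in_subtopology
  using assms profinite_completion_extensional by (auto simp: continuous_map_componentwise)

lemma topological_group_profinite_completion:
  "topological_group (profinite_completion G) (profinite_completion_topology G)"
  unfolding topological_group_def
proof (intro conjI)
  let ?P = "profinite_completion G" and ?T = "profinite_completion_topology G"
  interpret P: group ?P
    by (rule group_profinite_completion)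
  show "continuous_map (prod_topology ?T ?T) ?T (\<lambda>(f, g). f \<otimes>\<^bsub>?P\<^esub> g)"
  proof (rule continuous_map_into_profinite_completion)
    fix N assume N: "N \<in> fin_index_normals G"
    let ?D = "discrete_topology (rcosets\<^bsub>G\<^esub> N)"
    have "continuous_map (prod_topology ?T ?T) (prod_topology ?D ?D) (\<lambda>p. (fst p N, snd p N))"
      using continuous_map_profinite_completion_component[OF N]
      by (intro continuous_map_pairedI continuous_map_compose[OF continuous_map_fst, unfolded o_def]
          continuous_map_compose[OF continuous_map_snd, unfolded o_def])
    moreover have "continuous_map (prod_topology ?D ?D) ?D (\<lambda>(A, B). A <#>\<^bsub>G\<^esub> B)"
      unfolding prod_topology_discrete_topology[symmetric]
      using normal.setmult_closed[OF fin_index_normals_normal[OF N]] by auto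
    ultimately have "continuous_map (prod_topology ?T ?T) ?D (\<lambda>p. fst p N <#>\<^bsub>G\<^esub> snd p N)"
      by (auto dest: continuous_map_compose simp: o_def)
    then show "continuous_map (prod_topology ?T ?T) ?D (\<lambda>p. (case p of (f, g) \<Rightarrow> f \<otimes>\<^bsub>?P\<^esub> g) N)"
      using N by (simp add: mult_profinite_completion case_prod_beta)
  qed (auto simp: topspace_profinite_completion_topology)
  show "continuous_map ?T ?T (\<lambda>f. inv\<^bsub>?P\<^esub> f)"
  proof (rule continuous_map_into_profinite_completion)
    fix N assume N: "N \<in> fin_index_normals G"
    let ?D = "discrete_topology (rcosets\<^bsub>G\<^esub> N)"
    have "continuous_map ?D ?D (\<lambda>A. set_inv\<^bsub>G\<^esub> A)"
      using normal.setinv_closed[OF fin_index_normals_normal[OF N]] by auto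
    with continuous_map_profinite_completion_component[OF N]
    have "continuous_map ?T ?D ((\<lambda>A. set_inv\<^bsub>G\<^esub> A) \<circ> (\<lambda>f. f N))"
      by (rule continuous_map_compose)
    then have "continuous_map ?T ?D (\<lambda>f. set_inv\<^bsub>G\<^esub> (f N))"
      by (simp add: o_def)
    then show "continuous_map ?T ?D (\<lambda>f. (inv\<^bsub>?P\<^esub> f) N)"
      by (rule continuous_map_eq)
        (use N in \<open>simp add: topspace_profinite_completion_topology inv_profinite_completion\<close>)
  qed (auto simp: topspace_profinite_completion_topology)
qed (auto simp: group_profinite_completion topspace_profinite_completion_topology)

lemma compact_space_profinite_completion_topology:
  "compact_space (profinite_completion_topology G)"
proof -
  have "closedin (product_topology (\<lambda>N. discrete_topology (rcosets\<^bsub>G\<^esub> N)) (fin_index_normals G))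
      (carrier (profinite_completion G))"
    unfolding carrier_profinite_completion by (rule closedin_product_discrete_topology_pairwise)
  moreover have "compact_space (product_topology (\<lambda>N. discrete_topology (rcosets\<^bsub>G\<^esub> N)) (fin_index_normals G))"
    by (auto simp: compact_space_product_topology compact_space_discrete_topology fin_index_normals_def)
  ultimately show ?thesis
    unfolding profinite_completion_topology_def
    by (intro compact_space_subtopology closedin_compact_space)
qed

lemma profinite_group_profinite_completion:
  "profinite_group (profinite_completion G) (profinite_completion_topology G)"
  unfolding profinite_group_def
proof (intro conjI ballI)
  show "Hausdorff_space (profinite_completion_topology G)"
    unfolding profinite_completion_topology_def
    by (intro Hausdorff_space_subtopology) (simp add: Hausdorff_space_product_topology)
  show "connected_component_of_set (profinite_completion_topology G) f = {f}"
    if "f \<in> topspace (profinite_completion_topology G)" for f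
    using that unfolding profinite_completion_topology_def
    by (rule connected_component_of_set_subtopology_product_discrete)
qed (simp_all add: topological_group_profinite_completion compact_space_profinite_completion_topology)

lemma profinite_completion_minimal_closed_supplement_Int:
  assumes "C_group G"
    and H: "subgroup H (profinite_completion G)"
    and K: "closed_supplement (profinite_completion G) (profinite_completion_topology G) H K"
    and minimal: "\<And>K'. closed_supplement (profinite_completion G) (profinite_completion_topology G) H K' \<Longrightarrow>
      K' \<subseteq> K \<Longrightarrow> K' = K"
  shows "H \<inter> K = {\<one>\<^bsub>profinite_completion G\<^esub>}"
proof
  have component_trivial: "d N = N" if d: "d \<in> H \<inter> K" and N: "N \<in> fin_index_normals G" for d N
  proof -
    have "continuous_map (profinite_completion_topology G) (discrete_topology (carrier (G Mod N))) (\<lambda>f. f N)"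
      using continuous_map_profinite_completion_component[OF N] by (simp add: FactGroup_def)
    with topological_group_profinite_completion H K minimal group_hom_profinite_completion_component[OF N]
      C_group_FactGroup[OF assms(1) fin_index_normals_normal[OF N]]
    have "(\<lambda>f. f N) ` (H \<inter> K) \<subseteq> {\<one>\<^bsub>G Mod N\<^esub>}"
      by (rule minimal_closed_supplement_image_trivial)
    then show ?thesis
      using d by auto
  qed
  show "H \<inter> K \<subseteq> {\<one>\<^bsub>profinite_completion G\<^esub>}"
  proof
    fix d assume d: "d \<in> H \<inter> K"
    then have "d \<in> carrier (profinite_completion G)"
      using subgroup.mem_carrier[OF H] by simp
    then have "d = \<one>\<^bsub>profinite_completion G\<^esub>"
      using component_trivial[OF d] by (rule profinite_completion_eq_oneI)
    then show "d \<in> {\<one>\<^bsub>profinite_completion G\<^esub>}"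
      by simp
  qed
  show "{\<one>\<^bsub>profinite_completion G\<^esub>} \<subseteq> H \<inter> K"
    using subgroup.one_closed[OF H] subgroup.one_closed K by (auto simp: closed_supplement_def)
qed

theorem corollary2p5:
  fixes G :: "('a, 'b) monoid_scheme"
  assumes "C_group G"
  shows "profinite_C_group (profinite_completion G) (profinite_completion_topology G)"
  unfolding profinite_C_group_def
proof (intro conjI allI impI)
  let ?P = "profinite_completion G" and ?T = "profinite_completion_topology G"
  show "profinite_group ?P ?T"
    by (rule profinite_group_profinite_completion)
  fix H assume "subgroup H ?P \<and> closedin ?T H"
  then have H: "subgroup H ?P" "closedin ?T H"
    by simp_all
  obtain K where K: "closed_supplement ?P ?T H K"
    and minimal: "\<And>K'. closed_supplement ?P ?T H K' \<Longrightarrow> K' \<subseteq> K \<Longrightarrow> K' = K"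
    using minimal_closed_supplement_exists[OF topological_group_profinite_completion
        compact_space_profinite_completion_topology H] by blast
  have "H \<inter> K = {\<one>\<^bsub>?P\<^esub>}"
    by (rule profinite_completion_minimal_closed_supplement_Int[OF assms H(1) K minimal])
  then show "\<exists>K. closedin ?T K \<and> permutable_complement ?P H K"
    using K by (auto simp: closed_supplement_def permutable_complement_def)
qed

end
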